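(* Let $k\ge 2$ and $\mathcal{M}=\{M_1,\dots,M_k\}\subseteq\mathbb{S}^n$. Suppose that for all distinct indices $i,j\in\{1,\dots,k\}$ there exists $(\alpha,\beta)\neq(0,0)$ such that $\alpha M_i+\beta M_j$ is positive semidefinite. Then $\mathcal{S}(\mathcal{M})=\{X\in\mathbb{S}^n_+:\langle M_i,X\rangle\ge 0\ \forall i\in\{1,\dots,k\}\}$ is rank-one generated.
   Context: $\mathbb{S}^n$ is the space of real symmetric $n\times n$ matrices with $\langle A,B\rangle=\mathrm{tr}(AB)$, and $\mathbb{S}^n_+$ the PSD cone. A closed convex cone $\mathcal{S}\subseteq\mathbb{S}^n_+$ is rank-one generated (ROG) if $\mathcal{S}=\mathrm{conv}(\mathcal{S}\cap\{xx^\top:x\in\mathbb{R}^n\})$. *)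

theory Defs
  imports "HOL-Analysis.Analysis"
begin

text \<open>Real symmetric n x n matrices, with n encoded by the finite index type 'n.\<close>
definition sym_mat :: "real^'n^'n \<Rightarrow> bool" where
  "sym_mat A \<longleftrightarrow> transpose A = A"

definition psd :: "real^'n^'n \<Rightarrow> bool" where
  "psd A \<longleftrightarrow> sym_mat A \<and> (\<forall>x. 0 \<le> x \<bullet> (A *v x))"

definition psd_cone :: "(real^'n^'n) set" where
  "psd_cone = {A. psd A}"

definition mat_inner :: "real^'n^'n \<Rightarrow> real^'n^'n \<Rightarrow> real" where
  "mat_inner A B = trace (A ** B)"

definition outer :: "real^'n \<Rightarrow> real^'n^'n" where
  "outer x = (\<chi> i j. x $ i * x $ j)"

definition rog :: "(real^'n^'n) set \<Rightarrow> bool" where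
  "rog S \<longleftrightarrow> closed S \<and> convex S \<and> cone S \<and> S \<subseteq> psd_cone \<and>
     S = convex hull (S \<inter> range outer)"

definition S_of :: "nat \<Rightarrow> (nat \<Rightarrow> real^'n^'n) \<Rightarrow> (real^'n^'n) set" where
  "S_of k M = {X \<in> psd_cone. \<forall>i\<in>{1..k}. 0 \<le> mat_inner (M i) X}"

end

(*
  The slice B = S(M) \<inter> {X. trace X = 1} is compact and convex, so by Krein-Milman
  it suffices to show that its extreme points have rank one. Let X be extreme and call i active
  if <M_i, X> = 0. Suppose X = \<Sum> y y^T where every summand satisfies <M_i, y y^T> = 0 for every
  active i. For a nonzero summand y the direction D = y y^T - |y|^2 X keeps trace 1 and the active
  constraints tight, and X \<plusminus> c D stays positive semidefinite for |c| \<le> 1; the inactive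
  constraints have slack, so X \<plusminus> c D \<in> B for small c > 0. Extremality gives D = 0, i.e.
  X = y y^T / |y|^2.
  Such a decomposition exists. If every active M_i is semidefinite, any decomposition works: the
  terms <M_i, y y^T> then have a common sign and sum to 0. Otherwise some active M_i is indefinite.
  Rotating pairs of summands with terms of opposite signs makes all terms <M_i, y y^T> vanish; then
  for each other active M_j, the hypothesis that \<alpha> M_i + \<beta> M_j is positive semidefinite (where
  \<beta> \<noteq> 0, as M_i is indefinite) forces the terms <M_j, y y^T> to have the sign of \<beta>.
*)
theory Submission
  imports Defs "HOL-Library.Quadratic_Discriminant"
begin

lemma mat_inner_outer: "mat_inner M (outer x) = x \<bullet> (M *v x)"
  unfolding mat_inner_def trace_def outer_def matrix_matrix_mult_def matrix_vector_mult_def inner_vec_def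
  by (simp add: sum_distrib_left mult_ac)

lemma mat_inner_add_right: "mat_inner M (A + B) = mat_inner M A + mat_inner M B"
  unfolding mat_inner_def by (simp add: matrix_add_ldistrib trace_add)

lemma mat_inner_scaleR_right: "mat_inner M (c *\<^sub>R A) = c * mat_inner M A"
  unfolding mat_inner_def trace_def matrix_matrix_mult_def
  by (simp add: sum_distrib_left mult_ac)

lemma mat_inner_add_left: "mat_inner (A + B) M = mat_inner A M + mat_inner B M"
  unfolding mat_inner_def trace_def matrix_matrix_mult_def
  by (simp add: sum.distrib distrib_right)

lemma mat_inner_scaleR_left: "mat_inner (c *\<^sub>R A) M = c * mat_inner A M"
  unfolding mat_inner_def trace_def matrix_matrix_mult_def
  by (simp add: sum_distrib_left mult_ac)

lemma linear_mat_inner: "linear (mat_inner M)"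
  by (rule linearI) (simp_all add: mat_inner_add_right mat_inner_scaleR_right)

lemma mat_inner_diff_right: "mat_inner M (A - B) = mat_inner M A - mat_inner M B"
  using linear_diff[OF linear_mat_inner] .

lemma mat_inner_sum_list_outer:
  "mat_inner M (sum_list (map outer xs)) = (\<Sum>x\<leftarrow>xs. mat_inner M (outer x))"
  by (induction xs) (simp_all add: linear_0[OF linear_mat_inner] mat_inner_add_right)

lemma trace_scaleR: "trace (c *\<^sub>R A) = c * trace A"
  unfolding trace_def by (simp add: sum_distrib_left)

lemma linear_trace: "linear (trace :: real^'n^'n \<Rightarrow> real)"
  by (rule linearI) (simp_all add: trace_add trace_scaleR)

lemma trace_outer: "trace (outer x) = x \<bullet> x"
  unfolding trace_def outer_def inner_vec_def by simp

lemma outer_0 [simp]: "outer 0 = 0"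
  unfolding outer_def by (simp add: vec_eq_iff)

lemma outer_scaleR: "outer (c *\<^sub>R x) = c\<^sup>2 *\<^sub>R outer x"
  unfolding outer_def by (simp add: vec_eq_iff power2_eq_square mult_ac)

lemma outer_add_scaleR:
  "outer (a + t *\<^sub>R b) = outer a + t *\<^sub>R (outer (a + b) - outer a - outer b) + t\<^sup>2 *\<^sub>R outer b"
  unfolding outer_def by (simp add: vec_eq_iff algebra_simps power2_eq_square)

lemma outer_rotation:
  "outer (a + t *\<^sub>R b) + outer (b - t *\<^sub>R a) = (1 + t\<^sup>2) *\<^sub>R (outer a + outer b)"
  unfolding outer_def by (simp add: vec_eq_iff algebra_simps power2_eq_square)

lemma sym_mat_outer: "sym_mat (outer x)"
  unfolding sym_mat_def outer_def transpose_def by (simp add: vec_eq_iff mult.commute)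

lemma sym_mat_add: "sym_mat A \<Longrightarrow> sym_mat B \<Longrightarrow> sym_mat (A + B)"
  unfolding sym_mat_def transpose_def by (simp add: vec_eq_iff)

lemma sym_mat_diff: "sym_mat A \<Longrightarrow> sym_mat B \<Longrightarrow> sym_mat (A - B)"
  unfolding sym_mat_def transpose_def by (simp add: vec_eq_iff)

lemma sym_mat_scaleR: "sym_mat A \<Longrightarrow> sym_mat (c *\<^sub>R A)"
  unfolding sym_mat_def by (simp add: transpose_scalar)

lemma sym_mat_inner_commute: "sym_mat A \<Longrightarrow> x \<bullet> (A *v y) = y \<bullet> (A *v x)"
  unfolding sym_mat_def
  by (metis dot_lmul_matrix inner_commute transpose_matrix_vector)

lemma quadratic_form_outer: "y \<bullet> (outer x *v y) = (x \<bullet> y)\<^sup>2"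
  unfolding outer_def matrix_vector_mult_def inner_vec_def power2_eq_square
  by (simp add: sum_distrib_left sum_distrib_right mult_ac)

lemma quadratic_form_axis: "axis i 1 \<bullet> (A *v axis j 1) = A $ i $ j"
  by (simp add: matrix_vector_mult_basis inner_axis' column_def)

section \<open>Positive semidefinite matrices\<close>

lemma psd_outer: "psd (outer x)"
  unfolding psd_def by (simp add: sym_mat_outer quadratic_form_outer)

lemma psd_add: "psd A \<Longrightarrow> psd B \<Longrightarrow> psd (A + B)"
  unfolding psd_def
  by (simp add: sym_mat_add matrix_vector_mult_add_rdistrib inner_add_right add_nonneg_nonneg)

lemma psd_scaleR: "psd A \<Longrightarrow> 0 \<le> c \<Longrightarrow> psd (c *\<^sub>R A)"
  unfolding psd_def by (simp add: sym_mat_scaleR inner_scaleR_right flip: scaleR_matrix_vector_assoc)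

lemma psd_mat_inner_outer_nonneg: "psd A \<Longrightarrow> 0 \<le> mat_inner A (outer x)"
  unfolding psd_def mat_inner_outer by blast

lemma psd_0: "psd 0"
  unfolding psd_def sym_mat_def transpose_def by (simp add: vec_eq_iff)

lemma psd_sum_list_outer: "psd (sum_list (map outer xs))"
  by (induction xs) (simp_all add: psd_0 psd_add psd_outer)

lemma psd_sum_list_outer_minus_outer:
  assumes "y \<in> set ys"
  shows "psd (sum_list (map outer ys) - outer y)"
  using sum_list_map_remove1[OF assms, of outer] psd_sum_list_outer[of "remove1 y ys"] by simp

lemma psd_diag_nonneg: "psd X \<Longrightarrow> 0 \<le> X $ i $ i"
  unfolding psd_def by (metis quadratic_form_axis)

lemma psd_trace_nonneg: "psd X \<Longrightarrow> 0 \<le> trace X"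
  unfolding trace_def by (simp add: psd_diag_nonneg sum_nonneg)

lemma psd_Cauchy_Schwarz:
  assumes "psd A"
  shows "(x \<bullet> (A *v y))\<^sup>2 \<le> (x \<bullet> (A *v x)) * (y \<bullet> (A *v y))"
proof -
  define b qx qy where "b = x \<bullet> (A *v y)" and "qx = x \<bullet> (A *v x)" and "qy = y \<bullet> (A *v y)"
  have sym: "y \<bullet> (A *v x) = b"
    using assms sym_mat_inner_commute unfolding psd_def b_def by metis
  have nonneg: "0 \<le> qx + 2 * t * b + t\<^sup>2 * qy" for t
  proof -
    have "0 \<le> (x + t *\<^sub>R y) \<bullet> (A *v (x + t *\<^sub>R y))"
      using assms unfolding psd_def by blast
    also have "\<dots> = qx + 2 * t * b + t\<^sup>2 * qy"
      using sym unfolding qx_def qy_def b_def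
      by (simp add: matrix_vector_right_distrib matrix_vector_mult_scaleR inner_add_left
          inner_add_right algebra_simps power2_eq_square)
    finally show ?thesis .
  qed
  show ?thesis
  proof (cases "qy = 0")
    case True
    have "b = 0"
    proof (rule ccontr)
      assume "b \<noteq> 0"
      with True nonneg[of "- (qx + 1) / (2 * b)"] show False by (simp add: field_simps)
    qed
    then show ?thesis using True by (simp add: b_def qy_def)
  next
    case False
    then have "0 < qy"
      using assms unfolding psd_def qy_def by (metis order_le_less)
    with nonneg[of "- b / qy"] have "b\<^sup>2 \<le> qx * qy"
      by (simp add: field_simps power2_eq_square)
    then show ?thesis by (simp add: b_def qx_def qy_def)
  qed
qed

lemma psd_entry_square_le: "psd X \<Longrightarrow> (X $ i $ j)\<^sup>2 \<le> X $ i $ i * X $ j $ j"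
  using psd_Cauchy_Schwarz[of X "axis i 1" "axis j 1"] by (simp add: quadratic_form_axis)

lemma psd_norm_le_trace:
  assumes "psd X"
  shows "norm X \<le> trace X"
proof (rule power2_le_imp_le)
  have "(norm X)\<^sup>2 = (\<Sum>i\<in>UNIV. \<Sum>j\<in>UNIV. (X $ i $ j)\<^sup>2)"
    by (simp only: power2_norm_eq_inner) (simp add: inner_vec_def power2_eq_square)
  also have "\<dots> \<le> (\<Sum>i\<in>UNIV. \<Sum>j\<in>UNIV. X $ i $ i * X $ j $ j)"
    by (intro sum_mono psd_entry_square_le assms)
  also have "\<dots> = (trace X)\<^sup>2"
    by (simp add: trace_def power2_eq_square sum_product)
  finally show "(norm X)\<^sup>2 \<le> (trace X)\<^sup>2" .
  show "0 \<le> trace X" using assms by (rule psd_trace_nonneg)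
qed

lemma psd_trace_eq_0_imp_eq_0: "psd X \<Longrightarrow> trace X = 0 \<Longrightarrow> X = 0"
  using psd_norm_le_trace[of X] by simp

text \<open>One step of Cholesky factorisation.\<close>

lemma psd_minus_outer_column:
  assumes "psd X" and pos: "0 < X $ i $ i"
  defines "v \<equiv> (1 / sqrt (X $ i $ i)) *\<^sub>R (X *v axis i 1)"
  shows "psd (X - outer v)" and "(X - outer v) $ i $ i = 0"
    and "(X - outer v) $ j $ j \<le> X $ j $ j"
proof -
  have v_inner: "v \<bullet> y = (y \<bullet> (X *v axis i 1)) / sqrt (X $ i $ i)" for y
    unfolding v_def by (simp add: inner_commute)
  have diag: "(X - outer v) $ j $ j = X $ j $ j - (X $ j $ i)\<^sup>2 / X $ i $ i" for j
    using pos unfolding v_def outer_def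
    by (simp add: matrix_vector_mult_basis column_def power2_eq_square field_simps)
  show "psd (X - outer v)"
    unfolding psd_def
  proof (intro conjI allI)
    show "sym_mat (X - outer v)"
      using assms(1) sym_mat_outer unfolding psd_def by (blast intro: sym_mat_diff)
    fix y
    have "(y \<bullet> (X *v axis i 1))\<^sup>2 \<le> (y \<bullet> (X *v y)) * X $ i $ i"
      using psd_Cauchy_Schwarz[OF assms(1), of y "axis i 1"] by (simp add: quadratic_form_axis)
    then have "(v \<bullet> y)\<^sup>2 \<le> y \<bullet> (X *v y)"
      using pos by (simp add: v_inner power_divide pos_divide_le_eq)
    then show "0 \<le> y \<bullet> ((X - outer v) *v y)"
      by (simp add: matrix_vector_mult_diff_rdistrib inner_diff_right quadratic_form_outer)
  qed
  show "(X - outer v) $ i $ i = 0"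
    using pos unfolding diag by (simp add: power2_eq_square)
  show "(X - outer v) $ j $ j \<le> X $ j $ j"
    using pos unfolding diag by simp
qed

lemma psd_eq_sum_list_outer:
  assumes "psd X"
  obtains xs where "X = sum_list (map outer xs)"
  using assms
proof (induction "card {j. X $ j $ j \<noteq> 0}" arbitrary: X thesis rule: less_induct)
  case less
  show ?case
  proof (cases "\<exists>i. X $ i $ i \<noteq> 0")
    case False
    then have "X = 0"
      using less.prems(2) by (intro psd_trace_eq_0_imp_eq_0) (simp_all add: trace_def)
    then show ?thesis using less.prems(1)[of "[]"] by simp
  next
    case True
    then obtain i where "X $ i $ i \<noteq> 0" by blast
    then have pos: "0 < X $ i $ i"
      using psd_diag_nonneg[OF less.prems(2)] by (simp add: order_less_le)
    define v where "v = (1 / sqrt (X $ i $ i)) *\<^sub>R (X *v axis i 1)"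
    note peel = psd_minus_outer_column[OF less.prems(2) pos, folded v_def]
    have "(X - outer v) $ j $ j = 0" if "X $ j $ j = 0" for j
      using peel(3)[of j] psd_diag_nonneg[OF peel(1), of j] that by linarith
    then have "{j. (X - outer v) $ j $ j \<noteq> 0} \<subset> {j. X $ j $ j \<noteq> 0}"
      using peel(2) \<open>X $ i $ i \<noteq> 0\<close> by blast
    then have "card {j. (X - outer v) $ j $ j \<noteq> 0} < card {j. X $ j $ j \<noteq> 0}"
      by (simp add: psubset_card_mono)
    then obtain xs where "X - outer v = sum_list (map outer xs)"
      using less.hyps peel(1) by blast
    then show ?thesis
      using less.prems(1)[of "v # xs"] by (simp add: algebra_simps)
  qed
qed

section \<open>Rebalancing sums of rank-one matrices\<close>

lemma sum_list_same_sign_eq_0: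
  fixes f :: "'a \<Rightarrow> real"
  assumes "c \<noteq> 0" and "\<forall>x\<in>set xs. 0 \<le> c * f x" and "(\<Sum>x\<leftarrow>xs. f x) = 0"
  shows "\<forall>x\<in>set xs. f x = 0"
proof -
  have "(\<Sum>x\<leftarrow>xs. c * f x) = 0"
    using assms(3) by (simp add: sum_list_const_mult)
  then have "\<forall>x\<in>set xs. c * f x = 0"
    using assms(2) sum_list_nonneg_eq_0_iff[of "map (\<lambda>x. c * f x) xs"] by auto
  then show ?thesis using assms(1) by simp
qed

lemma sum_list_eq_0_obtains_pos_neg:
  fixes f :: "'a \<Rightarrow> real"
  assumes "(\<Sum>x\<leftarrow>xs. f x) = 0" and "\<exists>x\<in>set xs. f x \<noteq> 0"
  obtains a b where "a \<in> set xs" "b \<in> set xs" "0 < f a" "f b < 0"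
proof -
  have "\<exists>a\<in>set xs. 0 < f a"
  proof (rule ccontr)
    assume "\<not> ?thesis"
    then have "\<forall>x\<in>set xs. f x = 0"
      using assms(1) by (intro sum_list_same_sign_eq_0[of "-1"]) (auto simp: not_less)
    with assms(2) show False by blast
  qed
  moreover have "\<exists>b\<in>set xs. f b < 0"
  proof (rule ccontr)
    assume "\<not> ?thesis"
    then have "\<forall>x\<in>set xs. f x = 0"
      using assms(1) by (intro sum_list_same_sign_eq_0[of 1]) (auto simp: not_less)
    with assms(2) show False by blast
  qed
  ultimately show ?thesis using that by blast
qed

text \<open>Replacing (a, b) by the rotated pair (a + t b, b - t a) / sqrt (1 + t^2) preserves
  a a^T + b b^T; a suitable t exists because t \<mapsto> <M, (a + t b)(a + t b)^T> is a quadratic whose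
  leading and constant coefficients have opposite signs.\<close>

lemma outer_pair_rebalance:
  assumes qa: "0 < mat_inner M (outer a)" and qb: "mat_inner M (outer b) < 0"
  obtains y z where "outer y + outer z = outer a + outer b" and "mat_inner M (outer y) = 0"
proof -
  define r where "r = mat_inner M (outer (a + b)) - mat_inner M (outer a) - mat_inner M (outer b)"
  have quadratic: "mat_inner M (outer (a + t *\<^sub>R b))
      = mat_inner M (outer b) * t\<^sup>2 + r * t + mat_inner M (outer a)" for t
    unfolding outer_add_scaleR r_def
    by (simp add: mat_inner_add_right mat_inner_diff_right mat_inner_scaleR_right algebra_simps)
  have "0 \<le> discrim (mat_inner M (outer b)) r (mat_inner M (outer a))"
    using mult_neg_pos[OF qb qa] zero_le_power2[of r] unfolding discrim_def
    by (simp only: mult.assoc)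
  then obtain t where "mat_inner M (outer b) * t\<^sup>2 + r * t + mat_inner M (outer a) = 0"
    using discriminant_nonneg_ex qb by (metis less_irrefl)
  then have t: "mat_inner M (outer (a + t *\<^sub>R b)) = 0"
    by (simp add: quadratic)
  define s where "s = 1 / sqrt (1 + t\<^sup>2)"
  have "0 < 1 + t\<^sup>2"
    by (simp add: add_pos_nonneg)
  then have s2: "s\<^sup>2 * (1 + t\<^sup>2) = 1"
    unfolding s_def by (simp add: power_divide)
  show ?thesis
  proof
    show "outer (s *\<^sub>R (a + t *\<^sub>R b)) + outer (s *\<^sub>R (b - t *\<^sub>R a)) = outer a + outer b"
      by (simp add: outer_scaleR flip: scaleR_add_right) (simp add: outer_rotation s2)
    show "mat_inner M (outer (s *\<^sub>R (a + t *\<^sub>R b))) = 0"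
      by (simp add: outer_scaleR mat_inner_scaleR_right t)
  qed
qed

lemma sum_list_outer_rebalance:
  assumes "(\<Sum>x\<leftarrow>xs. mat_inner M (outer x)) = 0"
  obtains ys where "sum_list (map outer ys) = sum_list (map outer xs)"
    and "\<forall>y\<in>set ys. mat_inner M (outer y) = 0"
  using assms
proof (induction "length xs" arbitrary: xs thesis rule: less_induct)
  case less
  let ?q = "\<lambda>x. mat_inner M (outer x)"
  show ?case
  proof (cases "\<forall>x\<in>set xs. ?q x = 0")
    case True
    then show ?thesis using less.prems(1) by blast
  next
    case False
    then obtain a b where ab: "a \<in> set xs" "b \<in> set xs" "0 < ?q a" "?q b < 0"
      using sum_list_eq_0_obtains_pos_neg[OF less.prems(2)] by blast
    then have b: "b \<in> set (remove1 a xs)"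
      by (metis in_set_remove1 order_less_asym)
    define rest where "rest = remove1 b (remove1 a xs)"
    have split: "(\<Sum>x\<leftarrow>xs. f x) = f a + f b + (\<Sum>x\<leftarrow>rest. f x)"
      for f :: "_ \<Rightarrow> 'b::ab_group_add"
      unfolding rest_def
      using sum_list_map_remove1[OF ab(1), of f] sum_list_map_remove1[OF b, of f]
      by (simp add: add.assoc)
    obtain y z where yz: "outer y + outer z = outer a + outer b" "?q y = 0"
      using outer_pair_rebalance ab(3,4) by blast
    have "?q z = ?q a + ?q b"
      using arg_cong[OF yz(1), of "mat_inner M"] yz(2) by (simp add: mat_inner_add_right)
    then have "(\<Sum>x\<leftarrow>z # rest. ?q x) = 0"
      using less.prems(2) split[of ?q] by simp
    moreover have "length (z # rest) < length xs"
      using length_pos_if_in_set[OF b] ab(1) b unfolding rest_def by (simp add: length_remove1)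
    ultimately obtain ys where ys: "sum_list (map outer ys) = sum_list (map outer (z # rest))"
      "\<forall>y\<in>set ys. ?q y = 0"
      using less.hyps by blast
    show ?thesis
    proof (rule less.prems(1))
      show "sum_list (map outer (y # ys)) = sum_list (map outer xs)"
        using ys(1) split[of outer] yz(1) by (simp add: algebra_simps)
      show "\<forall>x\<in>set (y # ys). ?q x = 0" using ys(2) yz(2) by simp
    qed
  qed
qed

lemma psd_combination_coeff_nonzero:
  assumes "\<not> psd A" and "\<not> psd (- A)" and "(\<alpha>, \<beta>) \<noteq> (0, 0)"
    and "psd (\<alpha> *\<^sub>R A + \<beta> *\<^sub>R B)"
  shows "\<beta> \<noteq> 0"
proof
  assume "\<beta> = 0"
  then have psd_\<alpha>: "psd (\<alpha> *\<^sub>R A)" and "\<alpha> \<noteq> 0"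
    using assms(3,4) by simp_all
  have "psd ((1 / \<bar>\<alpha>\<bar>) *\<^sub>R (\<alpha> *\<^sub>R A))"
    by (rule psd_scaleR[OF psd_\<alpha>]) simp
  moreover have "(1 / \<bar>\<alpha>\<bar>) *\<^sub>R (\<alpha> *\<^sub>R A) = (if 0 < \<alpha> then A else - A)"
    using \<open>\<alpha> \<noteq> 0\<close> by (simp add: abs_if)
  ultimately show False
    using assms(1,2) by (simp split: if_splits)
qed

lemma mat_inner_sum_list_outer_eq_0_terms:
  assumes "mat_inner A (sum_list (map outer ys)) = 0" and "c \<noteq> 0"
    and "\<forall>y\<in>set ys. 0 \<le> c * mat_inner A (outer y)"
  shows "\<forall>y\<in>set ys. mat_inner A (outer y) = 0"
  using assms by (intro sum_list_same_sign_eq_0[of c]) (simp_all add: mat_inner_sum_list_outer)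

lemma semidefinite_mat_inner_sum_list_outer_eq_0_terms:
  assumes "psd A \<or> psd (- A)" and "mat_inner A (sum_list (map outer ys)) = 0"
  shows "\<forall>y\<in>set ys. mat_inner A (outer y) = 0"
proof -
  have "psd (1 *\<^sub>R A) \<or> psd ((-1) *\<^sub>R A)"
    using assms(1) by simp
  then obtain c :: real where "c \<noteq> 0" and psd_c: "psd (c *\<^sub>R A)"
    using one_neq_zero neg_one_neq_zero by blast
  moreover have "\<forall>y\<in>set ys. 0 \<le> c * mat_inner A (outer y)"
    using psd_mat_inner_outer_nonneg[OF psd_c] by (simp add: mat_inner_scaleR_left)
  ultimately show ?thesis
    using mat_inner_sum_list_outer_eq_0_terms[OF assms(2)] by blast
qed

lemma indefinite_combination_mat_inner_sum_list_outer_eq_0_terms: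
  assumes "\<not> psd A" and "\<not> psd (- A)" and "(\<alpha>, \<beta>) \<noteq> (0, 0)"
    and psd: "psd (\<alpha> *\<^sub>R A + \<beta> *\<^sub>R B)"
    and A_terms: "\<forall>y\<in>set ys. mat_inner A (outer y) = 0"
    and B_sum: "mat_inner B (sum_list (map outer ys)) = 0"
  shows "\<forall>y\<in>set ys. mat_inner B (outer y) = 0"
proof -
  have "0 \<le> \<beta> * mat_inner B (outer y)" if "y \<in> set ys" for y
    using psd_mat_inner_outer_nonneg[OF psd, of y] A_terms that
    by (simp add: mat_inner_add_left mat_inner_scaleR_left)
  then show ?thesis
    using mat_inner_sum_list_outer_eq_0_terms[OF B_sum psd_combination_coeff_nonzero[OF assms(1-4)]]
    by blast
qed

section \<open>Rank-one generation through the trace slice\<close>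

lemma closed_psd_cone: "closed (psd_cone :: (real^'n^'n) set)"
proof -
  have psd_cone_eq:
    "psd_cone = {X :: real^'n^'n. transpose X = X} \<inter> (\<Inter>x. {X. 0 \<le> x \<bullet> (X *v x)})"
    unfolding psd_cone_def psd_def sym_mat_def by auto
  have "linear (transpose :: real^'n^'n \<Rightarrow> real^'n^'n)"
    by (rule linearI) (simp_all add: transpose_def vec_eq_iff)
  then have closed_sym: "closed {X :: real^'n^'n. transpose X = X}"
    by (intro closed_Collect_eq continuous_on_id linear_continuous_on)
      (simp add: linear_conv_bounded_linear)
  moreover have "linear (\<lambda>X :: real^'n^'n. x \<bullet> (X *v x))" for x
    by (rule linearI)
      (simp_all add: matrix_vector_mult_add_rdistrib inner_add_right flip: scaleR_matrix_vector_assoc)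
  then have "closed {X :: real^'n^'n. 0 \<le> x \<bullet> (X *v x)}" for x
    by (intro closed_Collect_le continuous_on_const linear_continuous_on)
      (simp add: linear_conv_bounded_linear)
  then show ?thesis
    unfolding psd_cone_eq by (intro closed_Int closed_sym closed_INT) auto
qed

lemma compact_trace_slice:
  assumes "closed S" and "S \<subseteq> psd_cone"
  shows "compact (S \<inter> {X :: real^'n^'n. trace X = 1})"
  unfolding compact_eq_bounded_closed
proof
  show "bounded (S \<inter> {X. trace X = 1})"
    unfolding bounded_iff using assms(2) psd_norm_le_trace
    by (metis (mono_tags, lifting) IntD1 IntD2 mem_Collect_eq psd_cone_def subsetD)
  have "continuous_on UNIV (trace :: real^'n^'n \<Rightarrow> real)"
    by (rule linear_continuous_on) (simp add: linear_trace flip: linear_conv_bounded_linear)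
  then show "closed (S \<inter> {X. trace X = 1})"
    by (intro closed_Int assms(1) closed_Collect_eq continuous_on_const)
qed

lemma convex_trace_slice:
  assumes "convex S"
  shows "convex (S \<inter> {X :: real^'n^'n. trace X = 1})"
proof -
  have "convex {X :: real^'n^'n. trace X = 1}"
    unfolding convex_def by (simp add: trace_add trace_scaleR)
  then show ?thesis using assms by (rule convex_Int[rotated])
qed

lemma rog_if_extreme_points_of_trace_slice_rank_one:
  fixes S :: "(real^'n^'n) set"
  assumes "closed S" and "convex S" and "cone S" and psd: "S \<subseteq> psd_cone"
    and extreme: "\<And>X. X extreme_point_of (S \<inter> {X. trace X = 1}) \<Longrightarrow> X \<in> range outer"
  shows "rog S"
proof -
  let ?B = "S \<inter> {X. trace X = 1}" and ?R = "S \<inter> range outer"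
  have "cone ?R"
    unfolding cone_def
  proof clarify
    fix c :: real and y assume "outer y \<in> S" "0 \<le> c"
    then show "c *\<^sub>R outer y \<in> S \<inter> range outer"
      using \<open>cone S\<close> outer_scaleR[of "sqrt c" y] by (simp add: mem_cone) (metis rangeI)
  qed
  then have cone_hull: "cone (convex hull ?R)"
    by (rule cone_convex_hull)
  have "?B = convex hull {X. X extreme_point_of ?B}"
    using compact_trace_slice[OF assms(1) psd] convex_trace_slice[OF assms(2)]
    by (rule Krein_Milman_Minkowski)
  also have "\<dots> \<subseteq> convex hull ?R"
    using extreme by (intro hull_mono) (auto simp: extreme_point_of_def)
  finally have slice: "?B \<subseteq> convex hull ?R" .
  have "S \<subseteq> convex hull ?R"
  proof
    fix X assume "X \<in> S"
    then have "psd X" using psd unfolding psd_cone_def by blast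
    show "X \<in> convex hull ?R"
    proof (cases "trace X = 0")
      case True
      then have "X = outer 0"
        using psd_trace_eq_0_imp_eq_0[OF \<open>psd X\<close>] by simp
      then show ?thesis using \<open>X \<in> S\<close> by (blast intro: hull_inc)
    next
      case False
      then have pos: "0 < trace X"
        using psd_trace_nonneg[OF \<open>psd X\<close>] by simp
      then have "(1 / trace X) *\<^sub>R X \<in> ?B"
        using \<open>X \<in> S\<close> \<open>cone S\<close> by (simp add: mem_cone trace_scaleR)
      then have "(1 / trace X) *\<^sub>R X \<in> convex hull ?R"
        using slice by blast
      from mem_cone[OF cone_hull this, of "trace X"] pos show ?thesis
        by simp
    qed
  qed
  moreover have "convex hull ?R \<subseteq> S"
    using \<open>convex S\<close> by (intro hull_minimal) auto
  ultimately show ?thesis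
    unfolding rog_def using assms(1-4) by blast
qed

lemma mem_S_of: "X \<in> S_of k M \<longleftrightarrow> psd X \<and> (\<forall>i\<in>{1..k}. 0 \<le> mat_inner (M i) X)"
  unfolding S_of_def psd_cone_def by simp

lemma closed_S_of: "closed (S_of k M)"
proof -
  have "S_of k M = psd_cone \<inter> (\<Inter>i\<in>{1..k}. {X. 0 \<le> mat_inner (M i) X})"
    unfolding S_of_def by auto
  moreover have "continuous_on UNIV (mat_inner (M i))" for i
    by (rule linear_continuous_on) (simp add: linear_mat_inner flip: linear_conv_bounded_linear)
  ultimately show ?thesis
    by (simp add: closed_Int closed_psd_cone closed_INT closed_Collect_le)
qed

lemma convex_S_of: "convex (S_of k M)"
  unfolding convex_def
  by (auto intro!: psd_add psd_scaleR simp: mem_S_of mat_inner_add_right mat_inner_scaleR_right)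

lemma cone_S_of: "cone (S_of k M)"
  unfolding cone_def by (auto intro!: psd_scaleR simp: mem_S_of mat_inner_scaleR_right)

lemma S_of_subset_psd_cone: "S_of k M \<subseteq> psd_cone"
  unfolding S_of_def by blast

lemma extreme_point_of_add_diff:
  assumes "x extreme_point_of S" and "x + d \<in> S" and "x - d \<in> S"
  shows "d = 0"
proof -
  have "x = midpoint (x - d) (x + d)"
    by (simp add: midpoint_def scaleR_2 flip: scaleR_add_right)
  have "x - d = x + d"
  proof (rule ccontr)
    assume "x - d \<noteq> x + d"
    then have "x \<in> open_segment (x - d) (x + d)"
      using midpoint_in_open_segment \<open>x = midpoint (x - d) (x + d)\<close> by metis
    then show False
      using assms unfolding extreme_point_of_def by blast
  qed
  moreover have "(2::real) *\<^sub>R d = (x + d) - (x - d)"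
    by (simp add: scaleR_2 algebra_simps)
  ultimately show ?thesis by simp
qed

lemma psd_add_scaleR_outer_minus:
  assumes "psd (X - outer y)" and "0 \<le> l" and "l \<le> 1" and "\<bar>c\<bar> \<le> 1"
  shows "psd (X + c *\<^sub>R (outer y - l *\<^sub>R X))"
proof -
  have "\<bar>c * l\<bar> \<le> 1" and "\<bar>c * (1 - l)\<bar> \<le> 1"
    using assms(2-4) by (simp_all add: abs_mult mult_le_one)
  then have "0 \<le> 1 - c * l" and "0 \<le> 1 + c * (1 - l)"
    by (simp_all add: abs_le_iff)
  moreover have "X + c *\<^sub>R (outer y - l *\<^sub>R X)
      = (1 - c * l) *\<^sub>R (X - outer y) + (1 + c * (1 - l)) *\<^sub>R outer y"
    by (simp add: algebra_simps)
  ultimately show ?thesis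
    by (simp add: psd_add psd_scaleR assms(1) psd_outer)
qed

lemma eventually_at_0_nonneg_add_mult:
  fixes m d :: real
  assumes "0 \<le> m" and "m = 0 \<Longrightarrow> d = 0"
  shows "\<forall>\<^sub>F c in at 0. 0 \<le> m + c * d"
proof (cases "m = 0")
  case False
  then have "0 < m" using assms(1) by simp
  moreover have "((\<lambda>c. m + c * d) \<longlongrightarrow> m) (at 0)"
    by (auto intro!: tendsto_eq_intros)
  ultimately have "\<forall>\<^sub>F c in at 0. 0 < m + c * d"
    by (rule order_tendstoD(1)[rotated])
  then show ?thesis
    by (rule eventually_mono) simp
qed (use assms(2) in simp)

lemma extreme_point_of_S_of_slice_eq_outer:
  fixes M :: "nat \<Rightarrow> real^'n^'n"
  assumes extreme: "X extreme_point_of (S_of k M \<inter> {X. trace X = 1})"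
    and "y \<noteq> 0" and psd_rest: "psd (X - outer y)"
    and active: "\<forall>i\<in>{1..k}. mat_inner (M i) X = 0 \<longrightarrow> mat_inner (M i) (outer y) = 0"
  shows "X \<in> range outer"
proof -
  let ?B = "S_of k M \<inter> {X. trace X = 1}"
  have "X \<in> ?B"
    using extreme by (simp add: extreme_point_of_def)
  then have X: "psd X" "\<forall>i\<in>{1..k}. 0 \<le> mat_inner (M i) X" "trace X = 1"
    by (simp_all add: mem_S_of)
  define l where "l = y \<bullet> y"
  have "0 < l"
    using \<open>y \<noteq> 0\<close> by (simp add: l_def)
  have "l \<le> 1"
    using psd_trace_nonneg[OF psd_rest] X(3) by (simp add: trace_sub trace_outer l_def)
  define D where "D = outer y - l *\<^sub>R X"
  have near: "X + c *\<^sub>R D \<in> ?B" if "\<bar>c\<bar> < 1"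
    and nonneg: "\<forall>i\<in>{1..k}. 0 \<le> mat_inner (M i) X + c * mat_inner (M i) D" for c
  proof -
    have "psd (X + c *\<^sub>R D)"
      unfolding D_def using psd_rest \<open>0 < l\<close> \<open>l \<le> 1\<close> that(1)
      by (intro psd_add_scaleR_outer_minus) simp_all
    moreover have "trace (X + c *\<^sub>R D) = 1"
      using X(3) by (simp add: D_def trace_add trace_sub trace_scaleR trace_outer l_def)
    ultimately show ?thesis
      using nonneg by (simp add: mem_S_of mat_inner_add_right mat_inner_scaleR_right)
  qed
  have "\<forall>\<^sub>F c in at 0. 0 \<le> mat_inner (M i) X + c * mat_inner (M i) D" if "i \<in> {1..k}" for i
    using X(2) active that
    by (intro eventually_at_0_nonneg_add_mult) (simp_all add: D_def mat_inner_diff_right mat_inner_scaleR_right)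
  then have "\<forall>\<^sub>F c in at 0. \<forall>i\<in>{1..k}. 0 \<le> mat_inner (M i) X + c * mat_inner (M i) D"
    by (simp add: eventually_ball_finite)
  moreover have "\<forall>\<^sub>F c in at (0::real). \<bar>c\<bar> < 1"
    unfolding eventually_at by (auto intro!: exI[of _ 1])
  ultimately have "\<forall>\<^sub>F c in at 0. X + c *\<^sub>R D \<in> ?B"
    by eventually_elim (rule near)
  then obtain e :: real where "0 < e" and e: "\<And>c. c \<noteq> 0 \<Longrightarrow> \<bar>c\<bar> < e \<Longrightarrow> X + c *\<^sub>R D \<in> ?B"
    unfolding eventually_at by (auto simp: dist_real_def)
  have "X + (e / 2) *\<^sub>R D \<in> ?B" and "X - (e / 2) *\<^sub>R D \<in> ?B"
    using e[of "e / 2"] e[of "- e / 2"] \<open>0 < e\<close> by simp_all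
  then have "D = 0"
    using extreme_point_of_add_diff[OF extreme] \<open>0 < e\<close> by fastforce
  then have "X = outer ((1 / sqrt l) *\<^sub>R y)"
    using \<open>0 < l\<close> by (simp add: D_def outer_scaleR power_divide)
  then show ?thesis by simp
qed

lemma S_of_outer_decomposition_active:
  fixes M :: "nat \<Rightarrow> real^'n^'n"
  assumes pairs: "\<forall>i\<in>{1..k}. \<forall>j\<in>{1..k}. i \<noteq> j \<longrightarrow>
           (\<exists>\<alpha> \<beta>::real. (\<alpha>, \<beta>) \<noteq> (0, 0) \<and> psd (\<alpha> *\<^sub>R M i + \<beta> *\<^sub>R M j))"
    and "X \<in> S_of k M"
  obtains ys where "X = sum_list (map outer ys)"
    and "\<forall>i\<in>{1..k}. mat_inner (M i) X = 0 \<longrightarrow> (\<forall>y\<in>set ys. mat_inner (M i) (outer y) = 0)"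
proof -
  obtain xs where xs: "X = sum_list (map outer xs)"
    using assms(2) psd_eq_sum_list_outer by (auto simp: mem_S_of)
  consider (indefinite) i where "i \<in> {1..k}" "mat_inner (M i) X = 0" "\<not> psd (M i)" "\<not> psd (- M i)"
    | (semidefinite) "\<forall>i\<in>{1..k}. mat_inner (M i) X = 0 \<longrightarrow> psd (M i) \<or> psd (- M i)"
    by blast
  then show ?thesis
  proof cases
    case indefinite
    obtain ys where ys: "X = sum_list (map outer ys)" "\<forall>y\<in>set ys. mat_inner (M i) (outer y) = 0"
      using sum_list_outer_rebalance[where M = "M i" and xs = xs] indefinite(2) xs
      by (metis mat_inner_sum_list_outer)
    have "\<forall>y\<in>set ys. mat_inner (M j) (outer y) = 0"
      if j: "j \<in> {1..k}" and active: "mat_inner (M j) X = 0" for j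
    proof (cases "j = i")
      case False
      then obtain \<alpha> \<beta> :: real
        where "(\<alpha>, \<beta>) \<noteq> (0, 0)" "psd (\<alpha> *\<^sub>R M i + \<beta> *\<^sub>R M j)"
        using pairs[rule_format, OF indefinite(1) j] by blast
      then show ?thesis
        using indefinite_combination_mat_inner_sum_list_outer_eq_0_terms[OF indefinite(3,4)] ys(2)
          active unfolding ys(1) by blast
    qed (use ys in simp)
    then show ?thesis using ys(1) that by blast
  next
    case semidefinite
    have "\<forall>y\<in>set xs. mat_inner (M i) (outer y) = 0"
      if "i \<in> {1..k}" and "mat_inner (M i) X = 0" for i
      using semidefinite_mat_inner_sum_list_outer_eq_0_terms semidefinite that
      unfolding xs by blast
    then show ?thesis using that xs by blast
  qed
qed

lemma extreme_point_of_S_of_slice_rank_one: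
  fixes M :: "nat \<Rightarrow> real^'n^'n"
  assumes pairs: "\<forall>i\<in>{1..k}. \<forall>j\<in>{1..k}. i \<noteq> j \<longrightarrow>
           (\<exists>\<alpha> \<beta>::real. (\<alpha>, \<beta>) \<noteq> (0, 0) \<and> psd (\<alpha> *\<^sub>R M i + \<beta> *\<^sub>R M j))"
    and extreme: "X extreme_point_of (S_of k M \<inter> {X. trace X = 1})"
  shows "X \<in> range outer"
proof -
  have X: "X \<in> S_of k M" "trace X = 1"
    using extreme by (simp_all add: extreme_point_of_def)
  obtain ys where ys: "X = sum_list (map outer ys)"
    "\<forall>i\<in>{1..k}. mat_inner (M i) X = 0 \<longrightarrow> (\<forall>y\<in>set ys. mat_inner (M i) (outer y) = 0)"
    using S_of_outer_decomposition_active[OF pairs X(1)] by blast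
  have "\<exists>y\<in>set ys. y \<noteq> 0"
  proof (rule ccontr)
    assume "\<not> ?thesis"
    then have "sum_list (map outer ys) = 0"
      by (induction ys) auto
    with ys(1) X(2) show False by (simp add: trace_def)
  qed
  then obtain y where "y \<in> set ys" "y \<noteq> 0" by blast
  then show ?thesis
    using extreme_point_of_S_of_slice_eq_outer[OF extreme \<open>y \<noteq> 0\<close>] ys
      psd_sum_list_outer_minus_outer[of y ys] by blast
qed

theorem proposition3p3:
  fixes k :: nat and M :: "nat \<Rightarrow> real^'n^'n"
  assumes "k \<ge> 2"
    and "\<forall>i\<in>{1..k}. sym_mat (M i)"
    and "\<forall>i\<in>{1..k}. \<forall>j\<in>{1..k}. i \<noteq> j \<longrightarrow>
           (\<exists>\<alpha> \<beta>::real. (\<alpha>, \<beta>) \<noteq> (0, 0) \<and> psd (\<alpha> *\<^sub>R M i + \<beta> *\<^sub>R M j))"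
  shows "rog (S_of k M)"
  using closed_S_of convex_S_of cone_S_of S_of_subset_psd_cone
    extreme_point_of_S_of_slice_rank_one[OF assms(3)]
  by (rule rog_if_extreme_points_of_trace_slice_rank_one)

end
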